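(* For all $n\ge2$, viewing $\Delta^{n-1}$ as a facet of $\Delta^n$ (so $\Delta^n=v*\Delta^{n-1}$), the inclusion $\mathcal{M}(\Delta^{n-1})\hookrightarrow\mathcal{M}(\Delta^n)$ sending each pair to itself is null-homotopic, the long exact sequence in reduced homology of the pair $(\mathcal{M}(\Delta^n),\mathcal{M}(\Delta^{n-1}))$ splits into short exact sequences, and $$\tilde H_k(\mathcal{M}(\Delta^n),\mathcal{M}(\Delta^{n-1}))\cong\tilde H_k(\mathcal{M}(\Delta^n))\oplus\tilde H_{k-1}(\mathcal{M}(\Delta^{n-1}))$$ for all $k$.
   Context: All simplicial complexes are finite abstract simplicial complexes; simplices are nonempty. $\Delta^n$ is the simplicial complex of all nonempty subsets of an $(n+1)$-element vertex set. The Hasse diagram $\mathcal{H}(K)$ of $K$ is the directed graph whose vertices are the simplices of $K$, with an edge $\sigma\to\tau$ whenever $\sigma\subsetneq\tau$ and $\dim\tau=\dim\sigma+1$. A matching on $\mathcal{H}(K)$ is a set $W$ of edges of $\mathcal{H}(K)$, no two sharing a vertex; an edge in $W$ is called a pair. $W$ is acyclic if the directed graph obtained from $\mathcal{H}(K)$ by reversing every edge in $W$ has no directed cycle. The complex of discrete Morse matchings $\mathcal{M}(K)$ is the simplicial complex whose vertices are the edges of $\mathcal{H}(K)$ and whose simplices are the nonempty acyclic matchings on $\mathcal{H}(K)$. *)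

theory Defs
  imports "HOL-Homology.Homology"
begin

text \<open>Finite abstract simplicial complexes are represented by their set of simplices
  (nonempty finite vertex sets).\<close>

definition full_simplex :: "'v set \<Rightarrow> 'v set set" where
  "full_simplex V = {\<sigma>. \<sigma> \<subseteq> V \<and> \<sigma> \<noteq> {}}"

text \<open>Delta^n on the vertex set {0..n}; Delta^(n-1) on {0..<n} is the facet opposite v = n.\<close>
definition Delta :: "nat \<Rightarrow> nat set set" where
  "Delta n = full_simplex {0..n}"

definition hasse_edges :: "'v set set \<Rightarrow> ('v set \<times> 'v set) set" where
  "hasse_edges K = {(\<sigma>, \<tau>). \<sigma> \<in> K \<and> \<tau> \<in> K \<and> \<sigma> \<subset> \<tau> \<and> card \<tau> = card \<sigma> + 1}"

definition is_matching :: "'v set set \<Rightarrow> ('v set \<times> 'v set) set \<Rightarrow> bool" where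
  "is_matching K W \<longleftrightarrow> W \<subseteq> hasse_edges K \<and>
     (\<forall>e\<in>W. \<forall>e'\<in>W. e \<noteq> e' \<longrightarrow> {fst e, snd e} \<inter> {fst e', snd e'} = {})"

definition modified_hasse :: "'v set set \<Rightarrow> ('v set \<times> 'v set) set \<Rightarrow> ('v set \<times> 'v set) set" where
  "modified_hasse K W = (hasse_edges K - W) \<union> {(\<tau>, \<sigma>). (\<sigma>, \<tau>) \<in> W}"

definition acyclic_matching :: "'v set set \<Rightarrow> ('v set \<times> 'v set) set \<Rightarrow> bool" where
  "acyclic_matching K W \<longleftrightarrow> is_matching K W \<and> acyclic (modified_hasse K W)"

definition morse_complex :: "'v set set \<Rightarrow> ('v set \<times> 'v set) set set" where
  "morse_complex K = {W. W \<noteq> {} \<and> acyclic_matching K W}"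

definition realization :: "'a set set \<Rightarrow> ('a \<Rightarrow> real) topology" where
  "realization K = subtopology (powertop_real UNIV)
     {f. (\<forall>v. 0 \<le> f v) \<and> {v. f v \<noteq> 0} \<in> K \<and> sum f {v. f v \<noteq> 0} = 1}"

end

theory Submission
  imports Defs
begin

text \<open>Write \<open>v = n\<close> and \<open>p = ({v}, {0, v})\<close>. Adding \<open>p\<close> to an acyclic matching on
  \<open>\<Delta>\<^sup>n\<^sup>-\<^sup>1\<close> gives an acyclic matching on \<open>\<Delta>\<^sup>n\<close>: no arrow of the modified Hasse diagram
  leads from a simplex containing \<open>v\<close> to one avoiding it, and among the simplices containing \<open>v\<close>
  every arrow raises the cardinality, except the reversed pair \<open>{0, v} \<rightarrow> {v}\<close>, which is taken
  care of by giving \<open>{0, v}\<close> rank 0. Hence \<open>\<M>(\<Delta>\<^sup>n)\<close> contains the simplicial cone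
  \<open>p * \<M>(\<Delta>\<^sup>n\<^sup>-\<^sup>1)\<close>, whose realization is star-shaped about the vertex \<open>p\<close>.
  So the inclusion of \<open>\<M>(\<Delta>\<^sup>n\<^sup>-\<^sup>1)\<close> factors through a contractible subspace: it is
  null-homotopic and zero on reduced homology, which cuts the long exact sequence into short
  ones, and these split because the boundary map of the contractible pair is an isomorphism.\<close>

section \<open>Splitting the reduced homology sequence\<close>

lemma short_exact_sequence_right_split_iso_DirProd:
  assumes ses: "short_exact_sequence C B A g f" and B: "comm_group B"
    and g': "g' \<in> hom C B" and right_inverse: "\<And>z. z \<in> carrier C \<Longrightarrow> g (g' z) = z"
  shows "B \<cong> DirProd A C"
proof -
  have groups: "group A" "group B" "group C"
    using short_exact_sequenceD [OF ses] by (auto simp: group_hom_def)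
  obtain H K where HK: "H \<lhd> B" "subgroup K B" "H \<inter> K \<subseteq> {\<one>\<^bsub>B\<^esub>}" "H <#>\<^bsub>B\<^esub> K = carrier B"
    and iso: "f \<in> iso A (subgroup_generated B H)" "g \<in> iso (subgroup_generated B K) C"
    by (rule splitting_lemma_right [OF ses g' right_inverse])
  have "(\<lambda>(x, y). x \<otimes>\<^bsub>B\<^esub> y) \<in> iso (subgroup_generated B H \<times>\<times> subgroup_generated B K) B"
    using HK B by (simp add: group_disjoint_sum.iso_group_mul group_disjoint_sum_def
        normal_imp_subgroup comm_group.axioms(2))
  then have "B \<cong> subgroup_generated B H \<times>\<times> subgroup_generated B K"
    by (meson DirProd_group groups(2) group.group_subgroup_generated group.iso_sym is_isoI)
  also have "\<dots> \<cong> A \<times>\<times> C"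
    using iso groups by (meson group.DirProd_iso_trans group.group_subgroup_generated group.iso_sym is_isoI)
  finally show ?thesis .
qed

lemma hom_induced_reduced_trivial_through_contractible:
  assumes "S \<subseteq> C" "contractible_space (subtopology X C)"
    and c: "c \<in> carrier (reduced_homology_group k (subtopology X S))"
  shows "hom_induced k (subtopology X S) {} X {} id c = \<one>\<^bsub>reduced_homology_group k X\<^esub>"
proof -
  let ?c' = "hom_induced k (subtopology X S) {} (subtopology X C) {} id c"
  have factor: "hom_induced k (subtopology X C) {} X {} id ?c' = hom_induced k (subtopology X S) {} X {} id c"
    by (rule hom_induced_compose' [where f = id and g = id, simplified])
      (use assms in \<open>auto simp: continuous_map_from_subtopology continuous_map_in_subtopology\<close>)
  have "?c' \<in> carrier (reduced_homology_group k (subtopology X C))"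
    by (rule hom_induced_reduced [OF c])
  then have "?c' = \<one>\<^bsub>homology_group k (subtopology X C)\<^esub>"
    using trivial_reduced_homology_group_contractible_space [OF assms(2), of k]
    by (simp add: trivial_group_def one_reduced_homology_group)
  then show ?thesis
    unfolding factor [symmetric] one_reduced_homology_group by (simp add: hom_one [OF hom_induced_empty_hom])
qed

lemma inj_on_hom_induced_reduced_relative:
  assumes "S \<subseteq> C" "contractible_space (subtopology X C)"
  shows "inj_on (hom_induced k X {} X S id) (carrier (reduced_homology_group k X))"
proof -
  note exact = homology_exactness_reduced_3 [of k X S]
  interpret group_hom "reduced_homology_group k X" "relative_homology_group k X S" "hom_induced k X {} X S id"
    using exact by (simp add: group_hom_def group_hom_axioms_def)
  have "kernel (reduced_homology_group k X) (relative_homology_group k X S) (hom_induced k X {} X S id)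
      = hom_induced k (subtopology X S) {} X {} id ` carrier (reduced_homology_group k (subtopology X S))"
    using exact by simp
  also have "\<dots> = {\<one>\<^bsub>reduced_homology_group k X\<^esub>}"
    using hom_induced_reduced_trivial_through_contractible [OF assms]
      group.subgroup_self [OF group_reduced_homology_group, of k "subtopology X S"]
    by (force simp: subgroup_def)
  finally show ?thesis
    by (rule trivial_ker_imp_inj)
qed

lemma hom_boundary_reduced_surjective:
  assumes "S \<subseteq> C" "contractible_space (subtopology X C)"
  shows "hom_boundary k X S ` carrier (relative_homology_group k X S)
       = carrier (reduced_homology_group (k - 1) (subtopology X S))"
proof -
  have "hom_boundary k X S ` carrier (relative_homology_group k X S)
      = kernel (reduced_homology_group (k - 1) (subtopology X S)) (reduced_homology_group (k - 1) X)
          (hom_induced (k - 1) (subtopology X S) {} X {} id)"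
    using homology_exactness_reduced_2 [of k X S] by simp
  then show ?thesis
    using hom_induced_reduced_trivial_through_contractible [OF assms] by (auto simp: kernel_def)
qed

lemma hom_boundary_right_inverse_through_contractible:
  assumes SC: "S \<subseteq> C" and contr: "contractible_space (subtopology X C)" and ne: "topspace X \<inter> S \<noteq> {}"
  obtains g' where "g' \<in> hom (reduced_homology_group (k - 1) (subtopology X S)) (relative_homology_group k X S)"
    and "\<And>z. z \<in> carrier (reduced_homology_group (k - 1) (subtopology X S)) \<Longrightarrow> hom_boundary k X S (g' z) = z"
proof -
  let ?R = "reduced_homology_group (k - 1) (subtopology X S)"
  let ?RC = "relative_homology_group k (subtopology X C) S"
  let ?dC = "hom_boundary k (subtopology X C) S"
  let ?j = "hom_induced k (subtopology X C) S X S id"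
  have sub: "subtopology (subtopology X C) S = subtopology X S"
    using SC by (simp add: subtopology_subtopology Int_absorb1)
  \<comment> \<open>the section is the inclusion \<open>(C, S) \<rightarrow> (X, S)\<close> after the inverse boundary of the contractible pair\<close>
  have iso: "?dC \<in> iso ?RC ?R"
    using iso_relative_homology_of_contractible [OF contr, of S k] ne SC sub by auto
  define d' where "d' = inv_into (carrier ?RC) ?dC"
  have d'_iso: "d' \<in> iso ?R ?RC"
    unfolding d'_def by (rule group.iso_set_sym [OF _ iso]) simp
  have d'_inverse: "?dC (d' z) = z" if "z \<in> carrier ?R" for z
    using iso that unfolding d'_def iso_def bij_betw_def by (simp add: f_inv_into_f)
  show thesis
  proof
    show "?j \<circ> d' \<in> hom ?R (relative_homology_group k X S)"
      by (rule hom_compose [OF iso_imp_homomorphism [OF d'_iso] hom_induced_hom])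
  next
    fix z assume z: "z \<in> carrier ?R"
    have "hom_boundary k X S (?j (d' z))
        = hom_induced (k - 1) (subtopology X S) {} (subtopology X S) {} id (?dC (d' z))"
      using naturality_hom_induced [of "subtopology X C" X id S S k] sub
      by (auto simp: fun_eq_iff continuous_map_from_subtopology)
    also have "\<dots> = hom_induced (k - 1) (subtopology X S) {} (subtopology X S) {} id z"
      by (simp add: d'_inverse [OF z])
    also have "\<dots> = z"
      by (rule hom_induced_id) (use z carrier_reduced_homology_group_subset in blast)
    finally show "hom_boundary k X S ((?j \<circ> d') z) = z" by simp
  qed
qed

lemma reduced_homology_sequence_splits_through_contractible:
  assumes SC: "S \<subseteq> C" and CX: "C \<subseteq> topspace X" and "S \<noteq> {}"
    and contr: "contractible_space (subtopology X C)"
  shows "inj_on (hom_induced k X {} X S id) (carrier (reduced_homology_group k X))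
       \<and> exact_seq ([reduced_homology_group (k - 1) (subtopology X S),
                     relative_homology_group k X S,
                     reduced_homology_group k X],
                    [hom_boundary k X S, hom_induced k X {} X S id])
       \<and> hom_boundary k X S ` carrier (relative_homology_group k X S)
           = carrier (reduced_homology_group (k - 1) (subtopology X S))
       \<and> relative_homology_group k X S \<cong>
         DirProd (reduced_homology_group k X) (reduced_homology_group (k - 1) (subtopology X S))"
proof -
  have ne: "topspace X \<inter> S \<noteq> {}"
    using assms by blast
  note exact = homology_exactness_reduced_1 [OF ne, of k]
  note inj = inj_on_hom_induced_reduced_relative [OF SC contr, of k]
  note surj = hom_boundary_reduced_surjective [OF SC contr, of k]
  have "short_exact_sequence (reduced_homology_group (k - 1) (subtopology X S)) (relative_homology_group k X S)
          (reduced_homology_group k X) (hom_boundary k X S) (hom_induced k X {} X S id)"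
    using exact inj surj by (simp add: short_exact_sequence_iff epi_def mon_def)
  moreover obtain g' where
      "g' \<in> hom (reduced_homology_group (k - 1) (subtopology X S)) (relative_homology_group k X S)"
      "\<And>z. z \<in> carrier (reduced_homology_group (k - 1) (subtopology X S)) \<Longrightarrow> hom_boundary k X S (g' z) = z"
    using hom_boundary_right_inverse_through_contractible [OF SC contr ne, where k = k] by blast
  ultimately have "relative_homology_group k X S \<cong>
      DirProd (reduced_homology_group k X) (reduced_homology_group (k - 1) (subtopology X S))"
    by (rule short_exact_sequence_right_split_iso_DirProd [OF _ abelian_relative_homology_group])
  with exact inj surj show ?thesis
    by blast
qed

section \<open>Realizations and simplicial cones\<close>

lemma contractible_space_powertop_real_starlike:
  fixes C :: "('a \<Rightarrow> real) set" and d :: "'a \<Rightarrow> real"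
  assumes starlike: "\<And>g s. g \<in> C \<Longrightarrow> 0 \<le> s \<Longrightarrow> s \<le> 1 \<Longrightarrow> (\<lambda>e. (1 - s) * g e + s * d e) \<in> C"
  shows "contractible_space (subtopology (powertop_real UNIV) C)"
proof -
  define h where "h = (\<lambda>x::real \<times> ('a \<Rightarrow> real). \<lambda>e. (1 - fst x) * snd x e + fst x * d e)"
  let ?T = "prod_topology (top_of_set {0..1::real}) (subtopology (powertop_real UNIV) C)"
  have cont_fst: "continuous_map ?T euclideanreal fst"
    using continuous_map_fst [of "top_of_set {0..1::real}" "subtopology (powertop_real UNIV) C"]
    by (simp add: continuous_map_in_subtopology)
  have cont_snd: "continuous_map ?T euclideanreal (\<lambda>x. snd x e)" for e
  proof -
    have "continuous_map ?T (powertop_real UNIV) snd"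
      using continuous_map_snd [of "top_of_set {0..1::real}" "subtopology (powertop_real UNIV) C"]
      by (simp add: continuous_map_in_subtopology)
    then show ?thesis
      using continuous_map_compose [OF _ continuous_map_product_projection [of e UNIV "\<lambda>_. euclideanreal"]]
      by (simp add: o_def)
  qed
  have "continuous_map ?T (powertop_real UNIV) h"
    unfolding continuous_map_componentwise_UNIV h_def
    by (intro allI continuous_intros cont_fst cont_snd)
  moreover have "h ` topspace ?T \<subseteq> C"
    using starlike by (auto simp: h_def)
  ultimately have "continuous_map ?T (subtopology (powertop_real UNIV) C) h"
    by (simp add: continuous_map_in_subtopology image_subset_iff Pi_iff)
  moreover have "\<forall>x. h (0, x) = id x" "\<forall>x. h (1, x) = d"
    by (auto simp: h_def)
  ultimately show ?thesis
    unfolding contractible_space_def homotopic_with_def by blast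
qed

lemma topspace_realization:
  "topspace (realization K) = {f. (\<forall>v. 0 \<le> f v) \<and> {v. f v \<noteq> 0} \<in> K \<and> sum f {v. f v \<noteq> 0} = 1}"
  by (simp add: realization_def)

lemma topspace_realization_mono:
  "K \<subseteq> L \<Longrightarrow> topspace (realization K) \<subseteq> topspace (realization L)"
  by (auto simp: topspace_realization)

lemma realization_subcomplex:
  "K \<subseteq> L \<Longrightarrow> realization K = subtopology (realization L) (topspace (realization K))"
  using topspace_realization_mono [of K L] by (simp add: realization_def subtopology_subtopology Int_absorb1)

lemma vertex_in_topspace_realization:
  assumes "{p} \<in> K"
  shows "(\<lambda>v. if v = p then 1 else 0) \<in> topspace (realization K)"
proof -
  have "{v. (if v = p then 1 else 0 :: real) \<noteq> 0} = {p}"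
    by auto
  then show ?thesis
    using assms by (simp add: topspace_realization)
qed

definition simplicial_cone :: "'a \<Rightarrow> 'a set set \<Rightarrow> 'a set set" where
  "simplicial_cone p K = insert {p} (K \<union> insert p ` K)"

lemma insert_apex_in_simplicial_cone:
  "\<sigma> \<in> simplicial_cone p K \<Longrightarrow> insert p \<sigma> \<in> simplicial_cone p K"
  by (auto simp: simplicial_cone_def)

lemma contractible_space_realization_simplicial_cone:
  "contractible_space (realization (simplicial_cone p K))"
proof -
  define apex :: "'a \<Rightarrow> real" where "apex = (\<lambda>v. if v = p then 1 else 0)"
  have "(\<lambda>v. (1 - s) * f v + s * apex v) \<in> topspace (realization (simplicial_cone p K))"
    if f: "f \<in> topspace (realization (simplicial_cone p K))" and s: "0 \<le> s" "s \<le> 1" for f s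
  proof -
    define h where "h = (\<lambda>v. (1 - s) * f v + s * apex v)"
    define \<sigma> where "\<sigma> = {v. f v \<noteq> 0}"
    have f_nonneg: "\<forall>v. 0 \<le> f v" and \<sigma>: "\<sigma> \<in> simplicial_cone p K" and f_sum: "sum f \<sigma> = 1"
      using f by (auto simp: topspace_realization \<sigma>_def)
    have "finite \<sigma>"
      using f_sum sum.infinite by fastforce
    have h_nonneg: "\<forall>v. 0 \<le> h v"
      using f_nonneg s by (simp add: h_def apex_def)
    have support: "{v. h v \<noteq> 0} = (if s = 0 then \<sigma> else if s = 1 then {p} else insert p \<sigma>)"
      using f_nonneg s by (auto simp: h_def apex_def \<sigma>_def add_nonneg_eq_0_iff)
    then have "{v. h v \<noteq> 0} \<in> simplicial_cone p K"
      using \<sigma> insert_apex_in_simplicial_cone [OF \<sigma>] by (auto simp: simplicial_cone_def)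
    moreover have "sum h {v. h v \<noteq> 0} = 1"
    proof -
      have "sum h {v. h v \<noteq> 0} = sum h (insert p \<sigma>)"
        using \<open>finite \<sigma>\<close> support by (intro sum.mono_neutral_left) auto
      also have "\<dots> = (1 - s) * sum f (insert p \<sigma>) + s * sum apex (insert p \<sigma>)"
        by (simp add: h_def sum.distrib sum_distrib_left)
      also have "sum f (insert p \<sigma>) = 1"
        using \<open>finite \<sigma>\<close> f_sum by (simp add: sum.insert_if \<sigma>_def)
      also have "sum apex (insert p \<sigma>) = 1"
        using \<open>finite \<sigma>\<close> by (simp add: apex_def)
      finally show ?thesis
        by simp
    qed
    ultimately show ?thesis
      using h_nonneg by (simp add: topspace_realization h_def)
  qed
  then show ?thesis
    unfolding realization_def by (intro contractible_space_powertop_real_starlike) (simp add: realization_def)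
qed

lemma subset_simplicial_cone: "K \<subseteq> simplicial_cone p K"
  by (auto simp: simplicial_cone_def)

lemma realization_subcomplex_through_cone:
  assumes "simplicial_cone p K \<subseteq> L"
  shows "topspace (realization K) \<subseteq> topspace (realization (simplicial_cone p K))"
    and "topspace (realization (simplicial_cone p K)) \<subseteq> topspace (realization L)"
    and "contractible_space (subtopology (realization L) (topspace (realization (simplicial_cone p K))))"
  using topspace_realization_mono [OF subset_simplicial_cone] topspace_realization_mono [OF assms]
    realization_subcomplex [OF assms, symmetric] contractible_space_realization_simplicial_cone
  by simp_all

lemma nullhomotopic_realization_subcomplex_of_cone:
  assumes cone: "simplicial_cone p K \<subseteq> L"
  shows "\<exists>c. homotopic_with (\<lambda>_. True) (realization K) (realization L) id (\<lambda>_. c)"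
proof -
  have K: "realization K = subtopology (realization L) (topspace (realization K))"
    by (rule realization_subcomplex [OF subset_trans [OF subset_simplicial_cone cone]])
  have "continuous_map (realization K) (subtopology (realization L) (topspace (realization (simplicial_cone p K)))) id"
    using realization_subcomplex_through_cone(1) [OF cone]
    by (subst K) (auto simp: continuous_map_from_subtopology continuous_map_in_subtopology)
  then obtain c where "homotopic_with (\<lambda>_. True) (realization K) (realization L) (id \<circ> id) (\<lambda>_. c)"
    by (rule nullhomotopic_through_contractible_space [OF _ continuous_map_from_subtopology [OF continuous_map_id]
          realization_subcomplex_through_cone(3) [OF cone]])
  then show ?thesis
    by auto
qed

section \<open>Acyclic matchings on a simplex with a cone pair\<close>

lemma acyclic_matching_empty: "acyclic_matching K {}"
proof -
  have "hasse_edges K \<subseteq> measure card"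
    by (auto simp: hasse_edges_def)
  then have "acyclic (hasse_edges K)"
    by (meson wf_acyclic wf_measure wf_subset)
  then show ?thesis
    by (simp add: acyclic_matching_def is_matching_def modified_hasse_def)
qed

lemma hasse_edges_full_simplex_mono:
  "V \<subseteq> V' \<Longrightarrow> hasse_edges (full_simplex V) \<subseteq> hasse_edges (full_simplex V')"
  by (auto simp: hasse_edges_def full_simplex_def)

lemma matching_full_simplex_subset:
  "is_matching (full_simplex V) W \<Longrightarrow> (x, y) \<in> W \<Longrightarrow> x \<subseteq> V \<and> y \<subseteq> V"
  by (auto simp: is_matching_def hasse_edges_def full_simplex_def)

lemma is_matching_full_simplex_insert_cone_pair:
  assumes v: "v \<notin> V" and u: "u \<in> V" and W: "is_matching (full_simplex V) W"
  shows "is_matching (full_simplex (insert v V)) (insert ({v}, {u, v}) W)"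
proof -
  have "u \<noteq> v"
    using u v by blast
  then have "({v}, {u, v}) \<in> hasse_edges (full_simplex (insert v V))"
    using u by (auto simp: hasse_edges_def full_simplex_def)
  moreover have "W \<subseteq> hasse_edges (full_simplex (insert v V))"
    using W hasse_edges_full_simplex_mono [of V "insert v V"] by (auto simp: is_matching_def)
  moreover have "{fst e, snd e} \<inter> {fst e', snd e'} = {}" if "e = ({v}, {u, v})" "e' \<in> W" for e e'
    using matching_full_simplex_subset [OF W, of "fst e'" "snd e'"] that v by auto
  moreover have "\<forall>e\<in>W. \<forall>e'\<in>W. e \<noteq> e' \<longrightarrow> {fst e, snd e} \<inter> {fst e', snd e'} = {}"
    using W by (simp add: is_matching_def)
  ultimately show ?thesis
    unfolding is_matching_def by (metis (no_types, lifting) Int_commute insert_iff insert_subset)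
qed

lemma acyclic_modified_hasse_full_simplex_insert:
  assumes v: "v \<notin> V" and u: "u \<in> V" and W: "acyclic_matching (full_simplex V) W"
    and W': "W' = W \<or> W' = insert ({v}, {u, v}) W"
  shows "acyclic (modified_hasse (full_simplex (insert v V)) W')"
proof -
  let ?r = "modified_hasse (full_simplex (insert v V)) W'"
  let ?r_V = "modified_hasse (full_simplex V) W"
  have W_match: "is_matching (full_simplex V) W" and r_V_acyclic: "acyclic ?r_V"
    using W by (auto simp: acyclic_matching_def)
  define rank :: "'a set \<Rightarrow> nat" where
    "rank \<sigma> = (if ({v}, {u, v}) \<in> W' \<and> \<sigma> = {u, v} then 0 else card \<sigma>)" for \<sigma>
  define P where "P = {(x, y). v \<notin> x \<and> v \<notin> y \<and> (x, y) \<in> ?r_V\<^sup>+} \<union> {(x, y). v \<notin> x \<and> v \<in> y}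
    \<union> {(x, y). v \<in> x \<and> v \<in> y \<and> rank x < rank y}"
  have edges: "(x, y) \<in> P" if xy: "(x, y) \<in> ?r" for x y
  proof -
    consider (up) "(x, y) \<in> hasse_edges (full_simplex (insert v V))" "(x, y) \<notin> W'"
      | (down) "(y, x) \<in> W'"
      using xy by (auto simp: modified_hasse_def)
    then show ?thesis
    proof cases
      case up
      then have hasse: "x \<subset> y" "card y = card x + 1" "y \<subseteq> insert v V"
        by (auto simp: hasse_edges_def full_simplex_def)
      consider "v \<notin> y" | "v \<notin> x" "v \<in> y" | "v \<in> x"
        using hasse(1) by blast
      then show ?thesis
      proof cases
        case 1
        then have "(x, y) \<in> hasse_edges (full_simplex V)"
          using up(1) hasse by (auto simp: hasse_edges_def full_simplex_def)
        then have "(x, y) \<in> ?r_V"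
          using up(2) W' by (auto simp: modified_hasse_def)
        then show ?thesis
          using 1 hasse(1) by (auto simp: P_def)
      next
        case 2
        then show ?thesis
          by (auto simp: P_def)
      next
        case 3
        have "rank y = card y"
        proof (cases "y = {u, v}")
          case True
          then have "x = {v}"
            using 3 hasse(1) by auto
          then show ?thesis
            using True up(2) by (auto simp: rank_def)
        qed (simp add: rank_def)
        moreover have "rank x \<le> card x"
          by (simp add: rank_def)
        ultimately show ?thesis
          using 3 hasse by (auto simp: P_def)
      qed
    next
      case down
      then consider "(y, x) \<in> W" | "y = {v}" "x = {u, v}" "({v}, {u, v}) \<in> W'"
        using W' by auto
      then show ?thesis
      proof cases
        case 1
        then have "(x, y) \<in> ?r_V"
          by (auto simp: modified_hasse_def)
        then show ?thesis
          using matching_full_simplex_subset [OF W_match 1] v by (auto simp: P_def)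
      next
        case 2
        have "u \<noteq> v"
          using u v by blast
        then show ?thesis
          using 2 by (auto simp: P_def rank_def)
      qed
    qed
  qed
  have "trans P"
    unfolding trans_def P_def by (auto intro: trancl_trans)
  moreover have "?r \<subseteq> P"
    using edges by auto
  ultimately have "?r\<^sup>+ \<subseteq> P"
    by (metis trancl_id trancl_mono_subset)
  moreover have "(x, x) \<notin> P" for x
    using r_V_acyclic by (auto simp: P_def acyclic_def)
  ultimately show ?thesis
    unfolding acyclic_def by blast
qed

lemma acyclic_matching_full_simplex_insert:
  assumes v: "v \<notin> V" and u: "u \<in> V" and W: "acyclic_matching (full_simplex V) W"
  shows "acyclic_matching (full_simplex (insert v V)) W"
    and "acyclic_matching (full_simplex (insert v V)) (insert ({v}, {u, v}) W)"
proof -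
  have W_match: "is_matching (full_simplex V) W"
    using W by (simp add: acyclic_matching_def)
  then show "acyclic_matching (full_simplex (insert v V)) W"
    using acyclic_modified_hasse_full_simplex_insert [OF v u W] hasse_edges_full_simplex_mono [of V "insert v V"]
    by (auto simp: acyclic_matching_def is_matching_def)
  show "acyclic_matching (full_simplex (insert v V)) (insert ({v}, {u, v}) W)"
    using acyclic_modified_hasse_full_simplex_insert [OF v u W] is_matching_full_simplex_insert_cone_pair [OF v u W_match]
    by (simp add: acyclic_matching_def)
qed

lemma simplicial_cone_morse_complex_full_simplex:
  assumes "v \<notin> V" "u \<in> V"
  shows "simplicial_cone ({v}, {u, v}) (morse_complex (full_simplex V)) \<subseteq> morse_complex (full_simplex (insert v V))"
  using acyclic_matching_full_simplex_insert [OF assms] acyclic_matching_full_simplex_insert(2) [OF assms acyclic_matching_empty]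
  by (auto simp: simplicial_cone_def morse_complex_def)

lemma simplicial_cone_morse_complex_Delta:
  "simplicial_cone ({Suc m}, {0, Suc m}) (morse_complex (Delta m)) \<subseteq> morse_complex (Delta (Suc m))"
  using simplicial_cone_morse_complex_full_simplex [of "Suc m" "{0..m}" 0]
  by (simp add: Delta_def atLeast0_atMost_Suc)

theorem mainTheorem8:
  fixes n :: nat
  assumes "n \<ge> 2"
  defines "X \<equiv> realization (morse_complex (Delta n))"
      and "A \<equiv> realization (morse_complex (Delta (n - 1)))"
  shows "(\<exists>c. homotopic_with (\<lambda>_. True) A X id (\<lambda>_. c))
    \<and> (\<forall>k::int.
         inj_on (hom_induced k X {} X (topspace A) id) (carrier (reduced_homology_group k X))
       \<and> exact_seq ([reduced_homology_group (k - 1) (subtopology X (topspace A)),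
                     relative_homology_group k X (topspace A),
                     reduced_homology_group k X],
                    [hom_boundary k X (topspace A), hom_induced k X {} X (topspace A) id])
       \<and> hom_boundary k X (topspace A) ` carrier (relative_homology_group k X (topspace A))
           = carrier (reduced_homology_group (k - 1) (subtopology X (topspace A))))
    \<and> (\<forall>k::int. relative_homology_group k X (topspace A) \<cong>
         DirProd (reduced_homology_group k X) (reduced_homology_group (k - 1) (subtopology X (topspace A))))"
proof -
  obtain m where n: "n = Suc (Suc m)"
    using le_Suc_ex [OF assms(1)] by (auto simp: add_2_eq_Suc)
  let ?K = "morse_complex (Delta (n - 1))"
  let ?C = "topspace (realization (simplicial_cone ({n}, {0, n}) ?K))"
  have cone: "simplicial_cone ({n}, {0, n}) ?K \<subseteq> morse_complex (Delta n)"
    using simplicial_cone_morse_complex_Delta [of "Suc m"] n by simp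
  \<comment> \<open>this is where \<open>n \<ge> 2\<close> is used: the subcomplex, hence the subspace of the pair, is nonempty\<close>
  have "{({Suc m}, {0, Suc m})} \<in> ?K"
    using simplicial_cone_morse_complex_Delta [of m] n by (simp add: simplicial_cone_def)
  from vertex_in_topspace_realization [OF this] have A_ne: "topspace A \<noteq> {}"
    unfolding A_def by (metis empty_iff)
  have AC: "topspace A \<subseteq> ?C" and CX: "?C \<subseteq> topspace X" and contr: "contractible_space (subtopology X ?C)"
    unfolding A_def X_def by (rule realization_subcomplex_through_cone [OF cone])+
  have "\<exists>c. homotopic_with (\<lambda>_. True) A X id (\<lambda>_. c)"
    unfolding A_def X_def by (rule nullhomotopic_realization_subcomplex_of_cone [OF cone])
  with reduced_homology_sequence_splits_through_contractible [OF AC CX A_ne contr] show ?thesis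
    by blast
qed

end
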